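(* Let $X_0, X_1, \dots$ be positive, independent, identically distributed random variables with $E X_i = \mu_X > 0$. Let $L_1, L_2, \dots$ be positive, independent, identically distributed random variables with $E L_i = \mu_L < \infty$. Let $l_0$ be a positive constant. Then $$\frac{X_0}{l_0} + \frac{X_1}{l_0 + L_1} + \frac{X_2}{l_0 + L_1 + L_2} + \dots = \infty$$ almost surely. *)

theory Defs
  imports "HOL-Probability.Probability"
begin

end

theory Submission
  imports Defs
begin

(* Write S n = L 1 + ... + L n. Truncating the X i at 1 and combining Hoeffding's inequality
   with Borel-Cantelli shows that almost surely the block sums X p + ... + X (2p - 1) eventually
   exceed c p for some c > 0. Since E S n = n E L 1, Fatou's lemma makes liminf S n / n almost
   surely finite, so S n <= K n for infinitely many n. For such n and p = n div 2, the block
   of the series from p to 2p - 1 is at least c p / (l0 + S n), which is bounded below by a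
   positive constant; hence the series violates the Cauchy criterion. *)

lemma not_summable_div_if_block_sums_large:
  fixes x S :: "nat \<Rightarrow> real" and c m K :: real
  assumes x_nonneg: "\<And>n. 0 \<le> x n" and "c > 0" and S_nonneg: "\<And>n. 0 \<le> S n"
    and S_mono: "mono S" and "m > 0"
    and blocks: "eventually (\<lambda>p. real p * m \<le> (\<Sum>i\<in>{p..<2*p}. x i)) sequentially"
    and sublinear: "frequently (\<lambda>n. S n \<le> K * real n) sequentially"
  shows "\<not> summable (\<lambda>n. x n / (c + S n))"
proof
  assume "summable (\<lambda>n. x n / (c + S n))"
  define K' where "K' = c + 3 * \<bar>K\<bar>"
  have "K' > 0"
    using \<open>c > 0\<close> by (simp add: K'_def add_pos_nonneg)
  obtain N1 where N1: "\<And>p q. p \<ge> N1 \<Longrightarrow> norm (\<Sum>i\<in>{p..<q}. x i / (c + S i)) < m / K'"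
    using \<open>summable _\<close> \<open>m > 0\<close> \<open>K' > 0\<close> unfolding summable_Cauchy by (metis divide_pos_pos)
  obtain N0 where N0: "\<And>p. p \<ge> N0 \<Longrightarrow> real p * m \<le> (\<Sum>i\<in>{p..<2*p}. x i)"
    using blocks unfolding eventually_sequentially by metis
  obtain n where n: "n \<ge> 2 * max (max N0 N1) 1" "S n \<le> K * real n"
    using sublinear unfolding frequently_sequentially by blast
  define p where "p = n div 2"
  have p: "p \<ge> max (max N0 N1) 1" "2 * p \<le> n" "n \<le> 3 * p"
    using n(1) unfolding p_def by linarith+
  have "S n \<le> \<bar>K\<bar> * real n"
    using n(2) abs_ge_self[of K] by (meson mult_right_mono of_nat_0_le_iff order_trans)
  also have "\<dots> \<le> \<bar>K\<bar> * (3 * real p)"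
    using p(3) by (intro mult_left_mono) linarith+
  finally have "S n \<le> \<bar>K\<bar> * (3 * real p)" .
  moreover have "c \<le> c * real p"
    using p(1) \<open>c > 0\<close> by simp
  ultimately have D_le: "c + S n \<le> K' * real p"
    by (simp add: K'_def algebra_simps)
  have "m / K' = real p * m / (K' * real p)"
    using p(1) by simp
  also have "\<dots> \<le> (\<Sum>i\<in>{p..<2*p}. x i) / (c + S n)"
    using N0[of p] p D_le \<open>m > 0\<close> \<open>c > 0\<close> S_nonneg
    by (intro frac_le) (auto simp: sum_nonneg x_nonneg add_pos_nonneg)
  also have "\<dots> = (\<Sum>i\<in>{p..<2*p}. x i / (c + S n))"
    by (simp add: sum_divide_distrib)
  also have "\<dots> \<le> (\<Sum>i\<in>{p..<2*p}. x i / (c + S i))"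
    using p(2) \<open>c > 0\<close> S_nonneg
    by (intro sum_mono divide_left_mono) (auto simp: x_nonneg add_pos_nonneg monoD[OF S_mono])
  also have "\<dots> < m / K'"
    using N1[of p "2*p"] p(1) \<open>c > 0\<close> S_nonneg
    by (simp add: sum_nonneg x_nonneg add_pos_nonneg less_imp_le)
  finally show False by simp
qed

lemma
  fixes f g :: "'a \<Rightarrow> real"
  assumes [measurable]: "f \<in> borel_measurable M" "g \<in> borel_measurable M"
    and same_distr: "distr M borel f = distr M borel g"
  shows integrable_iff_distr_eq: "integrable M f \<longleftrightarrow> integrable M g"
    and integral_eq_if_distr_eq: "integral\<^sup>L M f = integral\<^sup>L M g"
proof -
  have "integrable M f \<longleftrightarrow> integrable (distr M borel f) (\<lambda>x. x)"
    by (simp add: integrable_distr_eq)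
  also have "\<dots> \<longleftrightarrow> integrable M g"
    by (simp add: same_distr integrable_distr_eq)
  finally show "integrable M f \<longleftrightarrow> integrable M g" .
  have "integral\<^sup>L M f = integral\<^sup>L (distr M borel f) (\<lambda>x. x)"
    by (simp add: integral_distr)
  also have "\<dots> = integral\<^sup>L M g"
    by (simp add: same_distr integral_distr)
  finally show "integral\<^sup>L M f = integral\<^sup>L M g" .
qed

lemma AE_frequently_bounded_if_integral_bounded:
  fixes Z :: "nat \<Rightarrow> 'a \<Rightarrow> real"
  assumes int: "\<And>n. integrable M (Z n)" and nonneg: "\<And>n. AE x in M. 0 \<le> Z n x"
    and bound: "\<And>n. integral\<^sup>L M (Z n) \<le> C"
  shows "AE x in M. \<exists>K. \<exists>\<^sub>F n in sequentially. Z n x \<le> K"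
proof -
  have [measurable]: "\<And>n. Z n \<in> borel_measurable M"
    using int by blast
  have "(\<integral>\<^sup>+x. liminf (\<lambda>n. ennreal (Z n x)) \<partial>M) \<le> liminf (\<lambda>n. \<integral>\<^sup>+x. ennreal (Z n x) \<partial>M)"
    by (rule nn_integral_liminf) simp
  also have "\<dots> \<le> ennreal C"
  proof -
    have "(\<integral>\<^sup>+x. ennreal (Z n x) \<partial>M) \<le> ennreal C" for n
      using nn_integral_eq_integral[OF int nonneg] bound by (simp add: ennreal_leI)
    then show ?thesis
      by (intro order_trans[OF Liminf_le_Limsup Limsup_bounded]) auto
  qed
  finally have "AE x in M. liminf (\<lambda>n. ennreal (Z n x)) \<noteq> \<infinity>"
    by (intro nn_integral_PInf_AE) (auto simp: top_unique)
  then show ?thesis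
  proof eventually_elim
    case (elim x)
    then have "\<not> \<infinity> \<le> liminf (\<lambda>n. ennreal (Z n x))"
      by (simp add: top_unique)
    then obtain y where "y < \<infinity>" "\<not> eventually (\<lambda>n. y < ennreal (Z n x)) sequentially"
      unfolding le_Liminf_iff by auto
    moreover obtain K where "y = ennreal K" "0 \<le> K"
      using \<open>y < \<infinity>\<close> by (cases y) auto
    ultimately have "\<exists>\<^sub>F n in sequentially. Z n x \<le> K"
      by (simp add: frequently_def ennreal_less_iff not_le)
    then show ?case ..
  qed
qed

lemma (in prob_space) AE_eventually_block_average_gt:
  fixes Y :: "nat \<Rightarrow> 'a \<Rightarrow> real"
  assumes indep: "indep_vars (\<lambda>_. borel) Y UNIV"
    and same_distr: "\<And>i. distr M borel (Y i) = distr M borel (Y 0)"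
    and bounded: "AE x in M. Y 0 x \<in> {a..b}" and "a < b" and "\<epsilon> > 0"
  shows "AE x in M. eventually (\<lambda>p. expectation (Y 0) - \<epsilon> < (\<Sum>i\<in>{p..<2*p}. Y i x) / real p) sequentially"
proof -
  have Y_rv [measurable]: "\<And>i. Y i \<in> borel_measurable M"
    using indep by (simp add: indep_vars_def)
  define B where "B p = {x\<in>space M. (\<Sum>i\<in>{p..<2*p}. Y i x) / real p \<le> expectation (Y 0) - \<epsilon>}" for p
  have [measurable]: "B p \<in> sets M" for p
    unfolding B_def by measurable
  define r where "r = exp (-2 * \<epsilon>\<^sup>2 / (b - a)\<^sup>2)"
  have prob_B: "prob (B p) \<le> r ^ p" for p
  proof (cases "p = 0")
    case False
    have "indep_vars (\<lambda>_. borel) Y {p..<2*p}"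
      using indep by (rule indep_vars_subset) simp
    then have "Hoeffding_ineq_iid M {p..<2*p} Y (Y 0) a b"
      unfolding Hoeffding_ineq_iid_def iid_interval_bounded_random_variables_def
        iid_interval_bounded_random_variables_axioms_def
      using prob_space_axioms same_distr bounded Y_rv by blast
    from Hoeffding_ineq_iid.Hoeffding_ineq_le'[OF this, of \<epsilon>]
    have "prob (B p) \<le> exp (-2 * real p * \<epsilon>\<^sup>2 / (b - a)\<^sup>2)"
      using \<open>a < b\<close> \<open>\<epsilon> > 0\<close> False by (simp add: B_def)
    also have "\<dots> = r ^ p"
      by (simp add: r_def exp_of_nat_mult[symmetric])
    finally show ?thesis .
  qed simp
  have "summable (\<lambda>p. r ^ p)"
    using \<open>a < b\<close> \<open>\<epsilon> > 0\<close> by (simp add: r_def)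
  then have "summable (\<lambda>p. prob (B p))"
    by (rule summable_comparison_test') (simp add: prob_B)
  then have "AE x in M. eventually (\<lambda>p. x \<in> space M - B p) sequentially"
    by (intro borel_cantelli_AE1) (auto simp: emeasure_eq_measure)
  then show ?thesis
    by (rule AE_mp) (auto intro!: AE_I2 elim!: eventually_mono simp: B_def)
qed

lemma (in prob_space) AE_eventually_block_sums_ge_linear:
  fixes X :: "nat \<Rightarrow> 'a \<Rightarrow> real"
  assumes X_indep: "indep_vars (\<lambda>_. borel) X UNIV"
    and X_id: "\<And>i. distr M borel (X i) = distr M borel (X 0)"
    and X_pos: "\<And>i x. x \<in> space M \<Longrightarrow> 0 < X i x"
  shows "\<exists>c>0. AE x in M. eventually (\<lambda>p. real p * c \<le> (\<Sum>i\<in>{p..<2*p}. X i x)) sequentially"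
proof -
  \<comment> \<open>Truncation at 1 makes Hoeffding's inequality applicable and keeps the mean positive.\<close>
  define Y where "Y i x = min (X i x) 1" for i x
  define m where "m = expectation (Y 0)"
  have X_rv [measurable]: "\<And>i. X i \<in> borel_measurable M"
    using X_indep by (simp add: indep_vars_def)
  have Y_rv [measurable]: "\<And>i. Y i \<in> borel_measurable M"
    unfolding Y_def by measurable
  have "m > 0"
  proof -
    have "integrable M (Y 0)"
      by (rule integrable_const_bound[where B=1]) (auto simp: Y_def X_pos less_imp_le)
    then show ?thesis
      unfolding m_def using integral_less_AE_space[of "\<lambda>_. 0" "Y 0"] X_pos
      by (simp add: Y_def emeasure_space_1)
  qed
  have "AE x in M. eventually (\<lambda>p. m - m/2 < (\<Sum>i\<in>{p..<2*p}. Y i x) / real p) sequentially"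
    unfolding m_def
  proof (rule AE_eventually_block_average_gt[where a=0 and b=1])
    show "indep_vars (\<lambda>_. borel) Y UNIV"
      unfolding Y_def by (rule indep_vars_compose2[OF X_indep, where Y="\<lambda>_ x. min x 1"]) simp
    have "distr M borel (Y i) = distr (distr M borel (X i)) borel (\<lambda>x. min x 1)" for i
      unfolding Y_def by (subst distr_distr) (auto simp: comp_def)
    then show "distr M borel (Y i) = distr M borel (Y 0)" for i
      using X_id[of i] by simp
    show "AE x in M. Y 0 x \<in> {0..1}"
      using X_pos by (auto intro!: AE_I2 simp: Y_def less_imp_le)
  qed (use \<open>m > 0\<close> in \<open>simp_all add: m_def\<close>)
  then have "AE x in M. eventually (\<lambda>p. real p * (m/2) \<le> (\<Sum>i\<in>{p..<2*p}. X i x)) sequentially"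
  proof (rule AE_mp, intro AE_I2 impI)
    fix x assume "x \<in> space M"
    assume "eventually (\<lambda>p. m - m/2 < (\<Sum>i\<in>{p..<2*p}. Y i x) / real p) sequentially"
    then show "eventually (\<lambda>p. real p * (m/2) \<le> (\<Sum>i\<in>{p..<2*p}. X i x)) sequentially"
    proof (rule eventually_mono)
      fix p :: nat
      assume "m - m/2 < (\<Sum>i\<in>{p..<2*p}. Y i x) / real p"
      then have "real p * (m/2) \<le> (\<Sum>i\<in>{p..<2*p}. Y i x)"
        by (cases "p = 0") (simp_all add: field_simps)
      also have "\<dots> \<le> (\<Sum>i\<in>{p..<2*p}. X i x)"
        by (intro sum_mono) (simp add: Y_def)
      finally show "real p * (m/2) \<le> (\<Sum>i\<in>{p..<2*p}. X i x)" .
    qed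
  qed
  then show ?thesis
    using \<open>m > 0\<close> by (intro exI[of _ "m/2"]) simp
qed

lemma (in prob_space) AE_frequently_partial_sums_le_linear:
  fixes L :: "nat \<Rightarrow> 'a \<Rightarrow> real"
  assumes L_rv: "\<And>i. i \<ge> 1 \<Longrightarrow> L i \<in> borel_measurable M"
    and L_nonneg: "\<And>i x. i \<ge> 1 \<Longrightarrow> x \<in> space M \<Longrightarrow> 0 \<le> L i x"
    and L_id: "\<And>i. i \<ge> 1 \<Longrightarrow> distr M borel (L i) = distr M borel (L 1)"
    and L1_int: "integrable M (L 1)"
  shows "AE x in M. \<exists>K. \<exists>\<^sub>F n in sequentially. (\<Sum>k\<in>{1..n}. L k x) \<le> K * real n"
proof -
  define S where "S n x = (\<Sum>k\<in>{1..n}. L k x)" for n x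
  define \<mu> where "\<mu> = expectation (L 1)"
  have L_int: "integrable M (L k)" and L_exp: "expectation (L k) = \<mu>" if "k \<ge> 1" for k
    using integrable_iff_distr_eq[OF L_rv[OF that] L_rv L_id[OF that]]
      integral_eq_if_distr_eq[OF L_rv[OF that] L_rv L_id[OF that]] L1_int
    by (simp_all add: \<mu>_def)
  have S_int: "integrable M (S n)" for n
    unfolding S_def by (intro Bochner_Integration.integrable_sum L_int) simp
  have S_exp: "expectation (S n) = real n * \<mu>" for n
    unfolding S_def by (simp add: Bochner_Integration.integral_sum L_int L_exp)
  have S_nonneg: "0 \<le> S n x" if "x \<in> space M" for n x
    unfolding S_def using L_nonneg[OF _ that] by (intro sum_nonneg) simp
  have "\<mu> \<ge> 0"
    unfolding \<mu>_def using L_nonneg by (intro integral_nonneg_AE AE_I2) simp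
  have "AE x in M. \<exists>K. \<exists>\<^sub>F n in sequentially. S n x / real n \<le> K"
    using S_int S_nonneg S_exp \<open>\<mu> \<ge> 0\<close>
    by (intro AE_frequently_bounded_if_integral_bounded[where C=\<mu>]) auto
  then show ?thesis
  proof eventually_elim
    case (elim x)
    then obtain K where "\<exists>\<^sub>F n in sequentially. S n x / real n \<le> K"
      by blast
    then have "\<exists>\<^sub>F n in sequentially. S n x \<le> K * real n"
    proof (rule frequently_elim1)
      fix n assume "S n x / real n \<le> K"
      then show "S n x \<le> K * real n"
        by (cases "n = 0") (simp_all add: S_def pos_divide_le_eq)
    qed
    then show ?case
      unfolding S_def by blast
  qed
qed

theorem lemma2:
  fixes M :: "'a measure"
    and X :: "nat \<Rightarrow> 'a \<Rightarrow> real"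
    and L :: "nat \<Rightarrow> 'a \<Rightarrow> real"
    and l0 :: real
  assumes "prob_space M"
    and X_rv: "\<And>i. X i \<in> borel_measurable M"
    and X_pos: "\<And>i x. x \<in> space M \<Longrightarrow> X i x > 0"
    and X_indep: "prob_space.indep_vars M (\<lambda>_. borel) X UNIV"
    and X_id: "\<And>i. distr M borel (X i) = distr M borel (X 0)"
    and X_mean: "(\<integral>\<^sup>+ x. ennreal (X 0 x) \<partial>M) > 0"
    and L_rv: "\<And>i. i \<ge> 1 \<Longrightarrow> L i \<in> borel_measurable M"
    and L_pos: "\<And>i x. i \<ge> 1 \<Longrightarrow> x \<in> space M \<Longrightarrow> L i x > 0"
    and L_indep: "prob_space.indep_vars M (\<lambda>_. borel) L {1..}"
    and L_id: "\<And>i. i \<ge> 1 \<Longrightarrow> distr M borel (L i) = distr M borel (L 1)"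
    and L_mean: "integrable M (L 1)"
    and l0_pos: "l0 > 0"
  shows "AE \<omega> in M. (\<Sum>n. ennreal (X n \<omega> / (l0 + (\<Sum>k\<in>{1..n}. L k \<omega>)))) = \<infinity>"
proof -
  interpret prob_space M by fact
  obtain c where "c > 0"
    and blocks: "AE x in M. eventually (\<lambda>p. real p * c \<le> (\<Sum>i\<in>{p..<2*p}. X i x)) sequentially"
    using AE_eventually_block_sums_ge_linear[OF X_indep X_id X_pos] by blast
  have "AE x in M. \<exists>K. \<exists>\<^sub>F n in sequentially. (\<Sum>k\<in>{1..n}. L k x) \<le> K * real n"
    using L_pos by (intro AE_frequently_partial_sums_le_linear[of L, OF L_rv _ L_id L_mean])
      (simp_all add: less_imp_le)
  with blocks AE_space show ?thesis
  proof eventually_elim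
    case (elim x)
    define S where "S n = (\<Sum>k\<in>{1..n}. L k x)" for n
    have S_nonneg: "0 \<le> S n" for n
      unfolding S_def using L_pos[OF _ elim(2)] by (intro sum_nonneg) (simp add: less_imp_le)
    have "mono S"
      unfolding S_def using L_pos[OF _ elim(2)] by (intro monoI sum_mono2) (auto simp: less_imp_le)
    obtain K where "\<exists>\<^sub>F n in sequentially. S n \<le> K * real n"
      using elim(3) unfolding S_def by blast
    with \<open>mono S\<close> have "\<not> summable (\<lambda>n. X n x / (l0 + S n))"
      using elim(1) X_pos[OF elim(2)] \<open>c > 0\<close> l0_pos S_nonneg
      by (intro not_summable_div_if_block_sums_large[where m=c]) (auto simp: less_imp_le)
    then have "(\<Sum>n. ennreal (X n x / (l0 + S n))) = top"
      using X_pos[OF elim(2)] l0_pos S_nonneg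
      by (intro summable_iff_suminf_neq_top) (simp add: add_pos_nonneg less_imp_le)
    then show ?case
      by (simp add: S_def)
  qed
qed

end
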